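(* Let $A\in\mathbb{R}^{10\times10}$ be the coefficient matrix of SSPERK$(10,4)$: $a_{ij}=\frac16$ for $1\le j<i\le5$; $a_{ij}=\frac1{15}$ for $6\le i\le 10$, $1\le j\le 5$; $a_{ij}=\frac16$ for $6\le j<i\le 10$; all other entries zero. Let $c=A\mathbf e$. If $\tilde b\in\mathbb{R}^{10}$ satisfies the third-order conditions $$\tilde b^T\mathbf e=1,\quad \tilde b^Tc=\tfrac12,\quad \tilde b^Tc^2=\tfrac13,\quad \tilde b^T\Big(\tfrac{c^2}{2}-Ac\Big)=0,$$ then it also satisfies the fourth-order condition $\tilde b^T\big(\frac{c^3}{6}-\frac{Ac^2}{2}\big)=0$. In particular no embedded third-order weight vector for SSPERK$(10,4)$ can violate all fourth-order conditions.
   Context: $\mathbf e=(1,\dots,1)^T$; powers of vectors such as $c^2,c^3$ are taken componentwise. *)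

theory Defs
  imports Complex_Main
begin

definition sspA :: "nat \<Rightarrow> nat \<Rightarrow> real" where
  "sspA i j =
     (if 1 \<le> j \<and> j < i \<and> i \<le> 5 then 1/6
      else if 6 \<le> i \<and> i \<le> 10 \<and> 1 \<le> j \<and> j \<le> 5 then 1/15
      else if 6 \<le> j \<and> j < i \<and> i \<le> 10 then 1/6
      else 0)"

definition sspc :: "nat \<Rightarrow> real" where
  "sspc i = (\<Sum>j=1..10. sspA i j)"

end

theory Submission
  imports Defs
begin

text \<open>The fourth-order residual \<open>c\<^sup>3/6 - A c\<^sup>2/2\<close> of SSPERK(10,4) lies in the span of \<open>c\<close>,
  \<open>c\<^sup>2\<close> and the third-order residual \<open>\<tau> = c\<^sup>2/2 - A c\<close>: componentwise it equals
  \<open>-c/36 + c\<^sup>2/24 + 11\<tau>/36\<close>. Pairing with \<open>b\<close> and using the third-order conditions gives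
  \<open>-1/72 + 1/72 + 0 = 0\<close>.\<close>

lemma sum_weights_linear_combination:
  fixes b q c \<tau> :: "'i \<Rightarrow> real"
  assumes "\<And>i. i \<in> S \<Longrightarrow> q i = \<alpha> + \<beta> * c i + \<gamma> * c i ^ 2 + \<delta> * \<tau> i"
  shows "(\<Sum>i\<in>S. b i * q i) =
    \<alpha> * (\<Sum>i\<in>S. b i) + \<beta> * (\<Sum>i\<in>S. b i * c i) + \<gamma> * (\<Sum>i\<in>S. b i * c i ^ 2)
      + \<delta> * (\<Sum>i\<in>S. b i * \<tau> i)"
proof -
  have "(\<Sum>i\<in>S. b i * q i) =
      (\<Sum>i\<in>S. \<alpha> * b i + \<beta> * (b i * c i) + \<gamma> * (b i * c i ^ 2) + \<delta> * (b i * \<tau> i))"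
    using assms by (intro sum.cong) (simp_all add: algebra_simps)
  then show ?thesis by (simp add: sum.distrib sum_distrib_left)
qed

lemma sum_atLeast1_atMost10:
  "(\<Sum>i::nat=1..10. f i) = f 1 + f 2 + f 3 + f 4 + f 5 + f 6 + f 7 + f 8 + f 9 + (f 10 :: real)"
  by (simp add: sum.atLeast_Suc_atMost numeral_eq_Suc add.assoc)

lemma sspc_values:
  "sspc 1 = 0" "sspc 2 = 1/6" "sspc 3 = 1/3" "sspc 4 = 1/2" "sspc 5 = 2/3"
  "sspc 6 = 1/3" "sspc 7 = 1/2" "sspc 8 = 2/3" "sspc 9 = 5/6" "sspc 10 = 1"
  unfolding sspc_def sum_atLeast1_atMost10 by (simp_all add: sspA_def)

lemma sspc_fourth_order_residual_in_span:
  assumes "i \<in> {1..10}"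
  shows "sspc i ^ 3 / 6 - (\<Sum>j=1..10. sspA i j * sspc j ^ 2) / 2
    = 0 + (-1/36) * sspc i + 1/24 * sspc i ^ 2
      + 11/36 * (sspc i ^ 2 / 2 - (\<Sum>j=1..10. sspA i j * sspc j))"
proof -
  from assms have "i = 1 \<or> i = 2 \<or> i = 3 \<or> i = 4 \<or> i = 5
      \<or> i = 6 \<or> i = 7 \<or> i = 8 \<or> i = 9 \<or> i = 10"
    by (simp add: atLeastAtMost_iff) presburger
  then show ?thesis
    unfolding sum_atLeast1_atMost10
    \<comment> \<open>the simplifier turns \<open>sspc 1\<close> into \<open>sspc (Suc 0)\<close>, hence the second form of the first value\<close>
    by (elim disjE)
      (simp_all add: sspc_values sspc_values(1)[simplified] sspA_def power2_eq_square power3_eq_cube)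
qed

theorem mainTheorem4:
  fixes bt :: "nat \<Rightarrow> real"
  assumes "(\<Sum>i=1..10. bt i) = 1"
    and "(\<Sum>i=1..10. bt i * sspc i) = 1/2"
    and "(\<Sum>i=1..10. bt i * sspc i ^ 2) = 1/3"
    and "(\<Sum>i=1..10. bt i * (sspc i ^ 2 / 2 - (\<Sum>j=1..10. sspA i j * sspc j))) = 0"
  shows "(\<Sum>i=1..10. bt i * (sspc i ^ 3 / 6 - (\<Sum>j=1..10. sspA i j * sspc j ^ 2) / 2)) = 0"
proof -
  have "(\<Sum>i=1..10. bt i * (sspc i ^ 3 / 6 - (\<Sum>j=1..10. sspA i j * sspc j ^ 2) / 2))
      = 0 * (\<Sum>i=1..10. bt i) + (-1/36) * (\<Sum>i=1..10. bt i * sspc i)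
        + 1/24 * (\<Sum>i=1..10. bt i * sspc i ^ 2)
        + 11/36 * (\<Sum>i=1..10. bt i * (sspc i ^ 2 / 2 - (\<Sum>j=1..10. sspA i j * sspc j)))"
    by (rule sum_weights_linear_combination, rule sspc_fourth_order_residual_in_span)
  then show ?thesis
    using assms by simp
qed

end
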